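(* Let $k\in\mathbb{Z}^+$ with $k>1$ and $\pi\in S_k$ be fixed, and let $A_\pi$ be the $k\times k$ permutation matrix of $\pi$. There is a constant $C=C(\pi)$ such that for all integers $m,n\ge 0$, the number of $n\times n$ $0$-$1$ matrices containing at most $m$ copies of $A_\pi$ is at most \[\exp\left(C\left(n+\sqrt[2k-1]{m\,n^{2k-2}}\right)\right).\]
   Context: A copy of $A_\pi$ in an $n\times n$ $0$-$1$ matrix $M$ is a choice of row indices $x_1<\dots<x_k$ and column indices $y_1<\dots<y_k$ with $M_{x_i,y_{\pi(i)}}=1$ for all $i$. *)

theory Defs
  imports "HOL-Combinatorics.Permutations" Complex_Main
begin

text \<open>An n x n 0-1 matrix is represented as a predicate M :: nat => nat => bool with
  rows and columns indexed by 0..n-1; entries outside this range are False, so that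
  each matrix has a unique representative.\<close>

definition zero_one_matrices :: "nat \<Rightarrow> (nat \<Rightarrow> nat \<Rightarrow> bool) set" where
  "zero_one_matrices n = {M. \<forall>i j. M i j \<longrightarrow> i < n \<and> j < n}"

definition copies :: "nat \<Rightarrow> (nat \<Rightarrow> nat) \<Rightarrow> nat \<Rightarrow> (nat \<Rightarrow> nat \<Rightarrow> bool) \<Rightarrow> ((nat list) \<times> (nat list)) set" where
  "copies k \<pi> n M = {(xs, ys). length xs = k \<and> length ys = k
      \<and> sorted_wrt (<) xs \<and> sorted_wrt (<) ys
      \<and> set xs \<subseteq> {..<n} \<and> set ys \<subseteq> {..<n}
      \<and> (\<forall>i<k. M (xs ! i) (ys ! (\<pi> i)))}"

definition num_copies :: "nat \<Rightarrow> (nat \<Rightarrow> nat) \<Rightarrow> nat \<Rightarrow> (nat \<Rightarrow> nat \<Rightarrow> bool) \<Rightarrow> nat" where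
  "num_copies k \<pi> n M = card (copies k \<pi> n M)"

end

theory Submission
  imports Defs
begin

(*
  Marcus-Tardos: a pattern-free point set in an n x n grid has O(n) points. Cut the grid into
  k^2 x k^2 blocks. If k blocks of one block column each meet the same k columns, they contain a
  copy, so few blocks meet k or more columns (or, symmetrically, rows); every other block holds at
  most (k-1)^2 points, and the nonempty blocks form a pattern-free set on the contracted grid.
  Deleting one point per copy turns this into |S| <= c (|R| + |C|) + #copies(S) for S in R x C.

  Averaging the latter over all pairs of r-subsets of rows and columns gives
  a (r/n)^2 <= 2 c r + X (r/n)^(2k) for a set of a points with X copies; with r ~ n^2/a this
  yields a^(2k-1) = O(X n^(2k-2)) when a >> n. Hence a set with at most m copies has
  O(f(n)) points, where f(n) = n + (m n^(2k-2))^(1/(2k-1)).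

  Contracting 2 x 2 blocks maps the sets on [2n]^2 with at most m copies to those on [n]^2, and
  the fibre over S' consists of subsets of 4|S'| = O(f(n)) points. Since f(2n) >= 3/2 f(n), the
  resulting recursion N(2n) <= N(n) exp(O(f(n))) solves to N(n) <= exp(O(f(n))).
*)

section \<open>Copies of a pattern in a point set\<close>

(* Unlike copies in Defs, the point set is not confined to a grid, so that restricting to
   R x C and contracting blocks stay within the notion. *)
definition pattern_copies :: "nat \<Rightarrow> (nat \<Rightarrow> nat) \<Rightarrow> (nat \<times> nat) set \<Rightarrow> (nat list \<times> nat list) set" where
  "pattern_copies k \<pi> S = {(xs, ys). length xs = k \<and> length ys = k
      \<and> sorted_wrt (<) xs \<and> sorted_wrt (<) ys \<and> (\<forall>i<k. (xs ! i, ys ! \<pi> i) \<in> S)}"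

lemma pattern_copyI:
  assumes "strict_mono_on {..<k} f" "strict_mono_on {..<k} g"
    and "\<forall>i<k. \<pi> i < k" "\<forall>i<k. (f i, g (\<pi> i)) \<in> S"
  shows "(map f [0..<k], map g [0..<k]) \<in> pattern_copies k \<pi> S"
  using assms unfolding pattern_copies_def strict_mono_on_def
  by (auto simp: sorted_wrt_iff_nth_less)

lemma pattern_copyD:
  assumes "(xs, ys) \<in> pattern_copies k \<pi> S"
  shows "length xs = k" "length ys = k"
    "strict_mono_on {..<k} ((!) xs)" "strict_mono_on {..<k} ((!) ys)"
    "\<forall>i<k. (xs ! i, ys ! \<pi> i) \<in> S"
  using assms unfolding pattern_copies_def strict_mono_on_def
  by (auto simp: sorted_wrt_iff_nth_less)

lemma card_set_pattern_copy:
  assumes "(xs, ys) \<in> pattern_copies k \<pi> S"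
  shows "card (set xs) = k" "card (set ys) = k"
  using assms unfolding pattern_copies_def by (auto simp: strict_sorted_iff distinct_card)

lemma pattern_copies_mono: "S \<subseteq> T \<Longrightarrow> pattern_copies k \<pi> S \<subseteq> pattern_copies k \<pi> T"
  unfolding pattern_copies_def by auto

lemma strict_mono_on_of_mono_comp:
  fixes h :: "'b::linorder \<Rightarrow> 'c::linorder"
  assumes "mono h" "strict_mono_on A (h \<circ> f)"
  shows "strict_mono_on A f"
proof (rule strict_mono_onI)
  fix r s assume "r \<in> A" "s \<in> A" "r < s"
  then have "h (f r) < h (f s)" using strict_mono_onD[OF assms(2)] by simp
  with assms(1) show "f r < f s" by (auto elim: mono_strict_invE)
qed

lemma obtain_strict_mono_enumeration:
  fixes T :: "'a::linorder set"
  assumes "finite T" "card T = k"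
  obtains \<tau> where "strict_mono_on {..<k} \<tau>" "\<forall>i<k. \<tau> i \<in> T"
proof
  let ?l = "sorted_list_of_set T"
  have "sorted_wrt (<) ?l" "length ?l = k" "set ?l = T"
    using assms by simp_all
  then show "strict_mono_on {..<k} ((!) ?l)" "\<forall>i<k. ?l ! i \<in> T"
    by (auto simp: strict_mono_on_def sorted_wrt_iff_nth_less)
qed

locale permutation_pattern =
  fixes k :: nat and \<pi> :: "nat \<Rightarrow> nat"
  assumes k_gt_1: "1 < k" and permutes: "\<pi> permutes {..<k}"
begin

lemma perm_less: "i < k \<Longrightarrow> \<pi> i < k"
  using permutes_in_image[OF permutes] by simp

lemma inv_perm_less: "j < k \<Longrightarrow> inv \<pi> j < k"
  using permutes_in_image[OF permutes_inv[OF permutes]] by simp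

lemma perm_inv_perm [simp]: "\<pi> (inv \<pi> j) = j"
  using permutes_inverses(1)[OF permutes] .

lemma inv_perm_perm [simp]: "inv \<pi> (\<pi> i) = i"
  using permutes_inverses(2)[OF permutes] .

lemma set_pattern_copy_subset:
  assumes "(xs, ys) \<in> pattern_copies k \<pi> S"
  shows "set xs \<subseteq> fst ` S" "set ys \<subseteq> snd ` S"
proof -
  note copy = pattern_copyD[OF assms]
  show "set xs \<subseteq> fst ` S"
    using copy(1,5) by (force simp: in_set_conv_nth)
  have "(xs ! inv \<pi> j, ys ! j) \<in> S" if "j < k" for j
    using copy(5) inv_perm_less[OF that] by fastforce
  then show "set ys \<subseteq> snd ` S"
    using copy(2) by (force simp: in_set_conv_nth)
qed

lemma finite_pattern_copies:
  assumes "finite S"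
  shows "finite (pattern_copies k \<pi> S)"
proof (rule finite_subset)
  show "pattern_copies k \<pi> S \<subseteq>
      {xs. set xs \<subseteq> fst ` S \<and> length xs = k} \<times> {ys. set ys \<subseteq> snd ` S \<and> length ys = k}"
    by (auto dest: set_pattern_copy_subset pattern_copyD(1,2))
  show "finite ({xs. set xs \<subseteq> fst ` S \<and> length xs = k} \<times> {ys. set ys \<subseteq> snd ` S \<and> length ys = k})"
    using assms by (intro finite_cartesian_product finite_lists_length_eq) auto
qed

lemma pattern_copies_restrict:
  "pattern_copies k \<pi> (S \<inter> R \<times> C) = {c \<in> pattern_copies k \<pi> S. set (fst c) \<subseteq> R \<and> set (snd c) \<subseteq> C}"
proof safe
  fix xs ys assume copy: "(xs, ys) \<in> pattern_copies k \<pi> (S \<inter> R \<times> C)"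
  show "(xs, ys) \<in> pattern_copies k \<pi> S"
    using pattern_copies_mono[of "S \<inter> R \<times> C" S] copy by blast
  show "x \<in> R" if "x \<in> set (fst (xs, ys))" for x
    using set_pattern_copy_subset(1)[OF copy] that by auto
  show "y \<in> C" if "y \<in> set (snd (xs, ys))" for y
    using set_pattern_copy_subset(2)[OF copy] that by auto
next
  fix xs ys assume "(xs, ys) \<in> pattern_copies k \<pi> S" "set (fst (xs, ys)) \<subseteq> R" "set (snd (xs, ys)) \<subseteq> C"
  then show "(xs, ys) \<in> pattern_copies k \<pi> (S \<inter> R \<times> C)"
    using perm_less unfolding pattern_copies_def by (auto intro!: nth_mem)
qed

lemma pattern_copy_transpose_iff:
  "(ys, xs) \<in> pattern_copies k (inv \<pi>) (prod.swap ` S) \<longleftrightarrow> (xs, ys) \<in> pattern_copies k \<pi> S"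
proof -
  have "(\<forall>j<k. (ys ! j, xs ! inv \<pi> j) \<in> prod.swap ` S) \<longleftrightarrow> (\<forall>i<k. (xs ! i, ys ! \<pi> i) \<in> S)"
  proof
    assume "\<forall>j<k. (ys ! j, xs ! inv \<pi> j) \<in> prod.swap ` S"
    then show "\<forall>i<k. (xs ! i, ys ! \<pi> i) \<in> S"
      using perm_less by (metis inv_perm_perm pair_in_swap_image)
  next
    assume "\<forall>i<k. (xs ! i, ys ! \<pi> i) \<in> S"
    then show "\<forall>j<k. (ys ! j, xs ! inv \<pi> j) \<in> prod.swap ` S"
      using inv_perm_less by (metis perm_inv_perm pair_in_swap_image)
  qed
  then show ?thesis
    unfolding pattern_copies_def by auto
qed

lemma pattern_copy_lift:
  assumes "mono h1" "mono h2"
    and copy: "(xs', ys') \<in> pattern_copies k \<pi> (map_prod h1 h2 ` S)"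
  obtains xs ys where "(xs, ys) \<in> pattern_copies k \<pi> S" "map h1 xs = xs'" "map h2 ys = ys'"
proof -
  note c = pattern_copyD[OF copy]
  have "\<forall>i\<in>{..<k}. \<exists>p\<in>S. h1 (fst p) = xs' ! i \<and> h2 (snd p) = ys' ! \<pi> i"
    using c(5) by force
  then obtain p where p: "\<And>i. i < k \<Longrightarrow> p i \<in> S \<and> h1 (fst (p i)) = xs' ! i \<and> h2 (snd (p i)) = ys' ! \<pi> i"
    by (metis bchoice lessThan_iff)
  define f where "f i = fst (p i)" for i
  define g where "g j = snd (p (inv \<pi> j))" for j
  have f: "\<forall>i<k. h1 (f i) = xs' ! i" and g: "\<forall>j<k. h2 (g j) = ys' ! j"
    using p inv_perm_less by (auto simp: f_def g_def)
  have "strict_mono_on {..<k} (h1 \<circ> f)" "strict_mono_on {..<k} (h2 \<circ> g)"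
    using c(3,4) f g by (auto simp: strict_mono_on_def)
  then have "strict_mono_on {..<k} f" "strict_mono_on {..<k} g"
    using assms(1,2) by (auto intro: strict_mono_on_of_mono_comp)
  moreover have "\<forall>i<k. (f i, g (\<pi> i)) \<in> S"
    using p by (simp add: f_def g_def)
  ultimately have "(map f [0..<k], map g [0..<k]) \<in> pattern_copies k \<pi> S"
    using perm_less by (intro pattern_copyI) auto
  moreover have "map h1 (map f [0..<k]) = xs'" "map h2 (map g [0..<k]) = ys'"
    using f g c(1,2) by (auto intro: nth_equalityI)
  ultimately show thesis by (rule that)
qed

lemma pattern_copies_image_empty:
  assumes "mono h1" "mono h2" "pattern_copies k \<pi> S = {}"
  shows "pattern_copies k \<pi> (map_prod h1 h2 ` S) = {}"
proof (rule ccontr)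
  assume "pattern_copies k \<pi> (map_prod h1 h2 ` S) \<noteq> {}"
  then obtain xs' ys' where "(xs', ys') \<in> pattern_copies k \<pi> (map_prod h1 h2 ` S)"
    by auto
  then show False
    using pattern_copy_lift[OF assms(1,2)] assms(3) by blast
qed

lemma card_pattern_copies_image_le:
  assumes "mono h1" "mono h2" "finite S"
  shows "card (pattern_copies k \<pi> (map_prod h1 h2 ` S)) \<le> card (pattern_copies k \<pi> S)"
proof -
  have "pattern_copies k \<pi> (map_prod h1 h2 ` S) \<subseteq> map_prod (map h1) (map h2) ` pattern_copies k \<pi> S"
  proof
    fix c assume "c \<in> pattern_copies k \<pi> (map_prod h1 h2 ` S)"
    then obtain xs ys where "(xs, ys) \<in> pattern_copies k \<pi> S" "c = (map h1 xs, map h2 ys)"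
      using pattern_copy_lift[OF assms(1,2)] by (metis surj_pair)
    then show "c \<in> map_prod (map h1) (map h2) ` pattern_copies k \<pi> S" by force
  qed
  then show ?thesis
    using finite_pattern_copies[OF assms(3)] by (meson card_image_le card_mono finite_imageI le_trans)
qed

end

section \<open>Block contraction\<close>

lemma card_le_sum_card_fibers:
  assumes "finite B" "f ` A \<subseteq> B"
  shows "card A \<le> (\<Sum>b\<in>B. card {a \<in> A. f a = b})"
proof (cases "finite A")
  case True
  have "(\<Sum>b\<in>B. card {a \<in> A. f a = b}) = card A"
    unfolding card_eq_sum by (rule sum.group[OF True assms])
  then show ?thesis by simp
qed simp

lemma card_le_card_fst_times_card_snd:
  assumes "finite A"
  shows "card A \<le> card (fst ` A) * card (snd ` A)"
proof -
  have "card A \<le> card (fst ` A \<times> snd ` A)"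
    using assms by (intro card_mono) force+
  then show ?thesis by (simp add: card_cartesian_product)
qed

lemma div_eq_iff_mem_interval:
  fixes x a K :: nat
  assumes "0 < K"
  shows "x div K = a \<longleftrightarrow> x \<in> {a*K..<a*K+K}"
proof
  assume "x div K = a"
  then show "x \<in> {a*K..<a*K+K}"
    using assms div_times_less_eq_dividend[of x K] dividend_less_div_times[of K x] by auto
qed (simp add: div_nat_eqI mult.commute)

definition block :: "nat \<Rightarrow> nat \<times> nat \<Rightarrow> nat \<times> nat" where
  "block K = map_prod (\<lambda>x. x div K) (\<lambda>y. y div K)"

definition block_cell :: "nat \<Rightarrow> (nat \<times> nat) set \<Rightarrow> nat \<times> nat \<Rightarrow> (nat \<times> nat) set" where
  "block_cell K S q = {p \<in> S. block K p = q}"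

definition wide_cells :: "nat \<Rightarrow> nat \<Rightarrow> (nat \<times> nat) set \<Rightarrow> (nat \<times> nat) set" where
  "wide_cells k K S = {q. k \<le> card (snd ` block_cell K S q)}"

definition tall_cells :: "nat \<Rightarrow> nat \<Rightarrow> (nat \<times> nat) set \<Rightarrow> (nat \<times> nat) set" where
  "tall_cells k K S = {q. k \<le> card (fst ` block_cell K S q)}"

lemma mono_div: "mono (\<lambda>x::nat. x div K)"
  by (simp add: div_le_mono monoI)

lemma block_vimage_singleton:
  assumes "0 < K"
  shows "block K -` {(a, c)} = {a*K..<a*K+K} \<times> {c*K..<c*K+K}"
  using div_eq_iff_mem_interval[OF assms] by (auto simp: block_def)

lemma card_block_vimage_le:
  assumes "0 < K" "finite Q"
  shows "finite (block K -` Q)" "card (block K -` Q) \<le> K * K * card Q"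
proof -
  have vimage: "block K -` Q = (\<Union>q\<in>Q. block K -` {q})" by auto
  have single: "finite (block K -` {q})" "card (block K -` {q}) = K * K" for q
    using block_vimage_singleton[OF assms(1), of "fst q" "snd q"] by (simp_all add: card_cartesian_product)
  show "finite (block K -` Q)"
    unfolding vimage using assms(2) single(1) by blast
  have "card (block K -` Q) \<le> (\<Sum>q\<in>Q. card (block K -` {q}))"
    unfolding vimage using assms(2) by (rule card_UN_le)
  then show "card (block K -` Q) \<le> K * K * card Q"
    by (simp add: single(2) mult.commute)
qed

lemma block_image_subset:
  assumes "S \<subseteq> {..<K*N} \<times> {..<K*N}"
  shows "block K ` S \<subseteq> {..<N} \<times> {..<N}"
proof
  fix q assume "q \<in> block K ` S"
  then obtain x y where "(x, y) \<in> S" "q = (x div K, y div K)"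
    by (auto simp: block_def)
  moreover from this(1) have "x < N * K" "y < N * K"
    using assms by (auto simp: mult.commute)
  ultimately show "q \<in> {..<N} \<times> {..<N}"
    by (simp add: less_mult_imp_div_less)
qed

lemma card_eq_sum_card_block_cells:
  assumes "finite S"
  shows "card S = (\<Sum>q\<in>block K ` S. card (block_cell K S q))"
  unfolding block_cell_def card_eq_sum by (rule sum.image_gen[OF assms])

lemma block_cell_subset:
  assumes "0 < K"
  shows "block_cell K S (a, c) \<subseteq> {a*K..<a*K+K} \<times> {c*K..<c*K+K}"
  unfolding block_vimage_singleton[OF assms, symmetric] by (auto simp: block_cell_def)

lemma wide_cells_subset:
  assumes "0 < k"
  shows "wide_cells k K S \<subseteq> block K ` S"
proof
  fix q assume "q \<in> wide_cells k K S"
  with assms have "block_cell K S q \<noteq> {}"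
    by (auto simp: wide_cells_def)
  then show "q \<in> block K ` S"
    by (auto simp: block_cell_def)
qed

lemma tall_cells_subset:
  assumes "0 < k"
  shows "tall_cells k K S \<subseteq> block K ` S"
proof
  fix q assume "q \<in> tall_cells k K S"
  with assms have "block_cell K S q \<noteq> {}"
    by (auto simp: tall_cells_def)
  then show "q \<in> block K ` S"
    by (auto simp: block_cell_def)
qed

lemma card_block_cell_le:
  assumes "0 < K" "finite S"
  shows "card (block_cell K S q)
    \<le> (k - 1) * (k - 1) + (if q \<in> wide_cells k K S \<union> tall_cells k K S then K * K else 0)"
proof -
  let ?cell = "block_cell K S q"
  have "fst ` ?cell \<subseteq> {fst q*K..<fst q*K+K}" "snd ` ?cell \<subseteq> {snd q*K..<snd q*K+K}"
    using block_cell_subset[OF assms(1), of S "fst q" "snd q"] by auto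
  then have K_bound: "card (fst ` ?cell) \<le> K" "card (snd ` ?cell) \<le> K"
    using card_mono[OF finite_atLeastLessThan] by (metis card_atLeastLessThan add_diff_cancel_left')+
  have prod: "card ?cell \<le> card (fst ` ?cell) * card (snd ` ?cell)"
    using assms(2) by (intro card_le_card_fst_times_card_snd) (simp add: block_cell_def)
  show ?thesis
  proof (cases "q \<in> wide_cells k K S \<union> tall_cells k K S")
    case True
    then show ?thesis
      using prod mult_le_mono[OF K_bound] by simp
  next
    case False
    then have "card (fst ` ?cell) \<le> k - 1" "card (snd ` ?cell) \<le> k - 1"
      by (auto simp: wide_cells_def tall_cells_def)
    then show ?thesis
      using prod mult_le_mono[of "card (fst ` ?cell)" "k - 1" "card (snd ` ?cell)" "k - 1"] False by simp
  qed
qed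

lemma block_cell_transpose:
  "block_cell K (prod.swap ` S) (c, a) = prod.swap ` block_cell K S (a, c)"
  by (auto simp: block_cell_def block_def)

lemma card_block_cells_le:
  assumes "0 < K" "0 < k" "finite S"
  shows "card S \<le> (k - 1) * (k - 1) * card (block K ` S) + K * K * card (wide_cells k K S \<union> tall_cells k K S)"
proof -
  let ?Q = "block K ` S" and ?X = "wide_cells k K S \<union> tall_cells k K S"
  have X: "?X \<subseteq> ?Q"
    using wide_cells_subset[OF assms(2)] tall_cells_subset[OF assms(2)] by blast
  have "card S = (\<Sum>q\<in>?Q. card (block_cell K S q))"
    by (rule card_eq_sum_card_block_cells[OF assms(3)])
  also have "\<dots> \<le> (\<Sum>q\<in>?Q. (k - 1) * (k - 1) + (if q \<in> ?X then K * K else 0))"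
    by (intro sum_mono card_block_cell_le assms)
  also have "\<dots> = (k - 1) * (k - 1) * card ?Q + K * K * card (?Q \<inter> {q. q \<in> ?X})"
    using assms(3) by (simp add: sum.distrib sum.If_cases)
  also have "?Q \<inter> {q. q \<in> ?X} = ?X"
    using X by blast
  finally show ?thesis .
qed

lemma tall_cells_transpose:
  "tall_cells k K S = prod.swap ` wide_cells k K (prod.swap ` S)"
proof -
  have "fst ` block_cell K S (a, c) = snd ` block_cell K (prod.swap ` S) (c, a)" for a c
    unfolding block_cell_transpose by (simp add: image_image)
  then show ?thesis
    unfolding tall_cells_def wide_cells_def by (auto simp: image_iff)
qed

section \<open>The Marcus-Tardos bound\<close>

definition rank :: "nat set \<Rightarrow> nat \<Rightarrow> nat" where
  "rank A x = card {a \<in> A. a < x}"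

lemma finite_rank_set: "finite {a \<in> A. a < (x::nat)}"
  by (rule finite_subset[of _ "{..<x}"]) auto

lemma mono_rank: "mono (rank A)"
  unfolding rank_def by (intro monoI card_mono finite_rank_set) auto

lemma rank_strict_mono:
  assumes "a \<in> A" "a < b"
  shows "rank A a < rank A b"
  unfolding rank_def using assms by (intro psubset_card_mono finite_rank_set) auto

lemma rank_less_card:
  assumes "finite A" "a \<in> A"
  shows "rank A a < card A"
  unfolding rank_def using assms by (intro psubset_card_mono) auto

lemma inj_on_rank: "inj_on (rank A) A"
  by (rule inj_onI) (metis linorder_neqE_nat rank_strict_mono less_irrefl)

context permutation_pattern
begin

abbreviation K :: nat where
  "K \<equiv> k * k"

lemma K_pos: "0 < K"
  using k_gt_1 by simp

lemma pattern_copy_of_wide_cells: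
  assumes "finite A" "card A = k" "finite T" "card T = k"
    and T: "\<forall>a\<in>A. T \<subseteq> snd ` block_cell K S (a, c)"
  shows "pattern_copies k \<pi> S \<noteq> {}"
proof -
  obtain \<alpha> where \<alpha>: "strict_mono_on {..<k} \<alpha>" "\<forall>i<k. \<alpha> i \<in> A"
    using obtain_strict_mono_enumeration[OF assms(1,2)] by blast
  obtain \<tau> where \<tau>: "strict_mono_on {..<k} \<tau>" "\<forall>i<k. \<tau> i \<in> T"
    using obtain_strict_mono_enumeration[OF assms(3,4)] by blast
  have "\<forall>i\<in>{..<k}. \<exists>p\<in>block_cell K S (\<alpha> i, c). snd p = \<tau> (\<pi> i)"
  proof
    fix i assume "i \<in> {..<k}"
    then have "\<alpha> i \<in> A" "\<tau> (\<pi> i) \<in> T"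
      using \<alpha>(2) \<tau>(2) perm_less by auto
    then show "\<exists>p\<in>block_cell K S (\<alpha> i, c). snd p = \<tau> (\<pi> i)"
      using T by (metis image_iff subsetD)
  qed
  then obtain p where p: "\<And>i. i < k \<Longrightarrow> p i \<in> block_cell K S (\<alpha> i, c) \<and> snd (p i) = \<tau> (\<pi> i)"
    by (metis bchoice lessThan_iff)
  have "strict_mono_on {..<k} ((\<lambda>x. x div K) \<circ> (fst \<circ> p))"
    using \<alpha>(1) p by (auto simp: strict_mono_on_def block_cell_def block_def map_prod_def split_beta)
  then have "strict_mono_on {..<k} (fst \<circ> p)"
    by (rule strict_mono_on_of_mono_comp[OF mono_div])
  moreover have "\<forall>i<k. ((fst \<circ> p) i, \<tau> (\<pi> i)) \<in> S"
    using p by (metis (no_types, lifting) block_cell_def comp_apply mem_Collect_eq prod.collapse)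
  ultimately show ?thesis
    using pattern_copyI[OF _ \<tau>(1)] perm_less by blast
qed

lemma card_wide_cells_in_column:
  assumes "finite S" "pattern_copies k \<pi> S = {}"
  shows "card {a. (a, c) \<in> wide_cells k K S} \<le> (K choose k) * (k - 1)"
proof -
  define W where "W = {a. (a, c) \<in> wide_cells k K S}"
  define B where "B = {T. T \<subseteq> {c*K..<c*K+K} \<and> card T = k}"
  have "\<forall>a\<in>W. \<exists>T. T \<subseteq> snd ` block_cell K S (a, c) \<and> card T = k"
    unfolding W_def wide_cells_def by (auto intro: obtain_subset_with_card_n)
  then obtain T where T: "\<And>a. a \<in> W \<Longrightarrow> T a \<subseteq> snd ` block_cell K S (a, c) \<and> card (T a) = k"
    by metis
  have maps: "T ` W \<subseteq> B"
    using T block_cell_subset[OF K_pos, of S _ c] unfolding B_def by fastforce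
  have "finite B"
    unfolding B_def by simp
  have fibers: "card {a \<in> W. T a = T0} \<le> k - 1" if "T0 \<in> B" for T0
  proof (rule ccontr)
    assume "\<not> ?thesis"
    then have "k \<le> card {a \<in> W. T a = T0}"
      by simp
    then obtain A where A: "A \<subseteq> {a \<in> W. T a = T0}" "card A = k" "finite A"
      by (rule obtain_subset_with_card_n)
    moreover have "finite T0" "card T0 = k"
      using that unfolding B_def by (auto intro: finite_subset)
    moreover have "\<forall>a\<in>A. T0 \<subseteq> snd ` block_cell K S (a, c)"
      using A(1) T by blast
    ultimately have "pattern_copies k \<pi> S \<noteq> {}"
      by (intro pattern_copy_of_wide_cells[of A T0 S c])
    with assms(2) show False by simp
  qed
  have "card W \<le> (\<Sum>T0\<in>B. card {a \<in> W. T a = T0})"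
    by (rule card_le_sum_card_fibers[OF \<open>finite B\<close> maps])
  also have "\<dots> \<le> (\<Sum>T0\<in>B. k - 1)"
    by (intro sum_mono fibers)
  also have "\<dots> = card B * (k - 1)"
    by simp
  also have "card B = K choose k"
    unfolding B_def by (subst n_subsets) auto
  finally show ?thesis
    unfolding W_def .
qed

lemma card_wide_cells:
  assumes "S \<subseteq> {..<K*N} \<times> {..<K*N}" "pattern_copies k \<pi> S = {}"
  shows "card (wide_cells k K S) \<le> N * ((K choose k) * (k - 1))"
proof -
  have "finite S"
    using assms(1) finite_subset by blast
  have wide: "wide_cells k K S \<subseteq> {..<N} \<times> {..<N}"
    using wide_cells_subset[of k K S] block_image_subset[OF assms(1)] k_gt_1 by simp
  then have "finite (wide_cells k K S)"
    using finite_subset by blast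
  have "card (wide_cells k K S) \<le> (\<Sum>c\<in>{..<N}. card {q \<in> wide_cells k K S. snd q = c})"
    using wide by (intro card_le_sum_card_fibers) auto
  also have "\<dots> \<le> (\<Sum>c\<in>{..<N}. (K choose k) * (k - 1))"
  proof (intro sum_mono)
    fix c
    have "{q \<in> wide_cells k K S. snd q = c} = (\<lambda>a. (a, c)) ` {a. (a, c) \<in> wide_cells k K S}"
      by force
    also have "card \<dots> \<le> card {a. (a, c) \<in> wide_cells k K S}"
      using finite_vimageI[OF \<open>finite (wide_cells k K S)\<close>, of "\<lambda>a. (a, c)"]
      by (intro card_image_le) (simp add: inj_on_def vimage_def)
    also have "\<dots> \<le> (K choose k) * (k - 1)"
      by (rule card_wide_cells_in_column[OF \<open>finite S\<close> assms(2)])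
    finally show "card {q \<in> wide_cells k K S. snd q = c} \<le> (K choose k) * (k - 1)" .
  qed
  finally show ?thesis
    by simp
qed

lemma card_tall_cells:
  assumes "S \<subseteq> {..<K*N} \<times> {..<K*N}" "pattern_copies k \<pi> S = {}"
  shows "card (tall_cells k K S) \<le> N * ((K choose k) * (k - 1))"
proof -
  interpret transposed: permutation_pattern k "inv \<pi>"
    using k_gt_1 permutes_inv[OF permutes] by unfold_locales
  have "prod.swap ` S \<subseteq> {..<K*N} \<times> {..<K*N}"
    using assms(1) by auto
  moreover have "pattern_copies k (inv \<pi>) (prod.swap ` S) = {}"
    using assms(2) pattern_copy_transpose_iff by fast
  ultimately have "card (wide_cells k K (prod.swap ` S)) \<le> N * ((K choose k) * (k - 1))"
    by (rule transposed.card_wide_cells)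
  then show ?thesis
    unfolding tall_cells_transpose by (simp add: card_image)
qed

definition block_const :: nat where
  "block_const = 2 * (K * K) * ((K choose k) * (k - 1)) + 1"

lemma card_avoiding_le_power:
  assumes "S \<subseteq> {..<K^j} \<times> {..<K^j}" "pattern_copies k \<pi> S = {}"
  shows "card S \<le> block_const * K^j"
  using assms
proof (induction j arbitrary: S)
  case 0
  then have "S \<subseteq> {(0, 0)}"
    by auto
  then have "card S \<le> 1"
    using card_mono[of "{(0, 0)}" S] by simp
  then show ?case
    by (simp add: block_const_def)
next
  case (Suc j)
  let ?N = "K^j"
  have S: "S \<subseteq> {..<K*?N} \<times> {..<K*?N}"
    using Suc.prems(1) by simp
  have "finite S"
    using S finite_subset by blast
  have "pattern_copies k \<pi> (block K ` S) = {}"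
    using pattern_copies_image_empty[OF mono_div mono_div Suc.prems(2)] by (simp add: block_def)
  then have IH: "card (block K ` S) \<le> block_const * ?N"
    using Suc.IH block_image_subset[OF S] by blast
  define E where "E = (K choose k) * (k - 1)"
  have "card (wide_cells k K S \<union> tall_cells k K S) \<le> 2 * ?N * E"
    using card_Un_le[of "wide_cells k K S" "tall_cells k K S"]
      card_wide_cells[OF S Suc.prems(2)] card_tall_cells[OF S Suc.prems(2)] by (simp add: E_def)
  then have "K * K * card (wide_cells k K S \<union> tall_cells k K S) \<le> K * K * (2 * ?N * E)"
    by (rule mult_le_mono2)
  also have "\<dots> \<le> block_const * ?N"
    unfolding block_const_def E_def[symmetric] by (simp add: algebra_simps)
  finally have "card S \<le> (k - 1) * (k - 1) * card (block K ` S) + block_const * ?N"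
    using card_block_cells_le[OF K_pos _ \<open>finite S\<close>, of k] k_gt_1 by simp
  also have "\<dots> \<le> (k - 1) * (k - 1) * (block_const * ?N) + block_const * ?N"
    using IH by simp
  also have "\<dots> = ((k - 1) * (k - 1) + 1) * (block_const * ?N)"
    by (simp add: algebra_simps)
  also have "\<dots> \<le> K * (block_const * ?N)"
    using k_gt_1 by (intro mult_right_mono) (cases k, auto)
  finally show ?case
    by (simp add: mult.left_commute)
qed

definition mt_const :: nat where
  "mt_const = block_const * K"

theorem marcus_tardos:
  assumes "S \<subseteq> {..<n} \<times> {..<n}" "pattern_copies k \<pi> S = {}"
  shows "card S \<le> mt_const * n"
proof (cases "n = 0")
  case False
  have "2 * 1 \<le> K"
    using k_gt_1 by (intro mult_le_mono) auto
  then obtain j where j: "K^j \<le> n" "n < K^(j+1)"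
    using ex_power_ivl1[of K n] False by force
  then have "S \<subseteq> {..<K^(j+1)} \<times> {..<K^(j+1)}"
    using assms(1) by auto
  then have "card S \<le> block_const * K^(j+1)"
    using card_avoiding_le_power assms(2) by blast
  also have "\<dots> \<le> mt_const * n"
    using j(1) by (simp add: mt_const_def)
  finally show ?thesis .
qed (use assms in simp)

lemma card_avoiding_le_rect:
  assumes "finite R" "finite C" "S \<subseteq> R \<times> C" "pattern_copies k \<pi> S = {}"
  shows "card S \<le> mt_const * (card R + card C)"
proof -
  define \<phi> where "\<phi> = map_prod (rank R) (rank C)"
  have "inj_on \<phi> S"
    unfolding \<phi>_def using map_prod_inj_on[OF inj_on_rank inj_on_rank] assms(3) by (rule inj_on_subset)
  moreover have "\<phi> ` S \<subseteq> {..<card R + card C} \<times> {..<card R + card C}"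
    using rank_less_card[OF assms(1)] rank_less_card[OF assms(2)] assms(3)
    by (fastforce simp: \<phi>_def)
  moreover have "pattern_copies k \<pi> (\<phi> ` S) = {}"
    unfolding \<phi>_def by (rule pattern_copies_image_empty[OF mono_rank mono_rank assms(4)])
  ultimately show ?thesis
    using marcus_tardos by (metis card_image)
qed

lemma card_le_mt_plus_card_copies:
  assumes "finite R" "finite C" "S \<subseteq> R \<times> C"
  shows "card S \<le> mt_const * (card R + card C) + card (pattern_copies k \<pi> S)"
proof -
  have "finite S"
    using assms finite_subset by blast
  define H where "H = (\<lambda>(xs, ys). (xs ! 0, ys ! \<pi> 0)) ` pattern_copies k \<pi> S"
  have "card H \<le> card (pattern_copies k \<pi> S)"
    unfolding H_def by (rule card_image_le[OF finite_pattern_copies[OF \<open>finite S\<close>]])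
  have "pattern_copies k \<pi> (S - H) = {}"
  proof (rule ccontr)
    assume "pattern_copies k \<pi> (S - H) \<noteq> {}"
    then obtain xs ys where copy: "(xs, ys) \<in> pattern_copies k \<pi> (S - H)"
      by auto
    then have "(xs, ys) \<in> pattern_copies k \<pi> S"
      using pattern_copies_mono[of "S - H" S] by auto
    then have "(xs ! 0, ys ! \<pi> 0) \<in> H"
      unfolding H_def by force
    moreover have "(xs ! 0, ys ! \<pi> 0) \<in> S - H"
      using pattern_copyD(5)[OF copy] k_gt_1 by auto
    ultimately show False
      by simp
  qed
  then have "card (S - H) \<le> mt_const * (card R + card C)"
    using card_avoiding_le_rect[OF assms(1,2)] assms(3) by blast
  moreover have "card S \<le> card ((S - H) \<union> H)"
    using \<open>finite S\<close> finite_pattern_copies[OF \<open>finite S\<close>] by (intro card_mono) (auto simp: H_def)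
  then have "card S \<le> card (S - H) + card H"
    using card_Un_le le_trans by blast
  ultimately show ?thesis
    using \<open>card H \<le> card (pattern_copies k \<pi> S)\<close> by linarith
qed

end

section \<open>Sampling rows and columns\<close>

lemma card_supersets_of_card:
  assumes "finite A" "U \<subseteq> A" "card U \<le> r"
  shows "card {R. R \<subseteq> A \<and> card R = r \<and> U \<subseteq> R} = (card A - card U) choose (r - card U)"
proof -
  have "finite U"
    using assms(1,2) finite_subset by blast
  have "{R. R \<subseteq> A \<and> card R = r \<and> U \<subseteq> R} = (\<lambda>R'. R' \<union> U) ` {R'. R' \<subseteq> A - U \<and> card R' = r - card U}"
  proof (intro set_eqI iffI)
    fix R assume "R \<in> {R. R \<subseteq> A \<and> card R = r \<and> U \<subseteq> R}"
    then have "R = (R - U) \<union> U" "R - U \<subseteq> A - U" "card (R - U) = r - card U"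
      using \<open>finite U\<close> by (auto simp: card_Diff_subset)
    then show "R \<in> (\<lambda>R'. R' \<union> U) ` {R'. R' \<subseteq> A - U \<and> card R' = r - card U}"
      by blast
  next
    fix R assume "R \<in> (\<lambda>R'. R' \<union> U) ` {R'. R' \<subseteq> A - U \<and> card R' = r - card U}"
    then obtain R' where R': "R = R' \<union> U" "R' \<subseteq> A - U" "card R' = r - card U"
      by auto
    have "finite R'"
      using R'(2) assms(1) finite_subset by blast
    moreover have "R' \<inter> U = {}"
      using R'(2) by blast
    ultimately have "card R = card R' + card U"
      unfolding R'(1) using \<open>finite U\<close> by (simp add: card_Un_disjoint)
    then show "R \<in> {R. R \<subseteq> A \<and> card R = r \<and> U \<subseteq> R}"
      using R' assms(2,3) by auto
  qed
  moreover have "inj_on (\<lambda>R'. R' \<union> U) {R'. R' \<subseteq> A - U \<and> card R' = r - card U}"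
    by (rule inj_onI) auto
  ultimately have "card {R. R \<subseteq> A \<and> card R = r \<and> U \<subseteq> R} = card (A - U) choose (r - card U)"
    using assms(1) by (simp add: card_image n_subsets)
  then show ?thesis
    using \<open>finite U\<close> assms(2) by (simp add: card_Diff_subset)
qed

lemma sum_card_contained_in_subset_pairs:
  fixes U V :: "'a \<Rightarrow> 'b set"
  assumes "finite P" "finite A" "u \<le> r"
    and UV: "\<And>p. p \<in> P \<Longrightarrow> U p \<subseteq> A \<and> card (U p) = u \<and> V p \<subseteq> A \<and> card (V p) = u"
  defines "F \<equiv> {R. R \<subseteq> A \<and> card R = r}"
  shows "(\<Sum>(R, C)\<in>F \<times> F. card {p \<in> P. U p \<subseteq> R \<and> V p \<subseteq> C})
    = card P * ((card A - u) choose (r - u))^2"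
proof -
  have "finite F"
    unfolding F_def using assms(2) by simp
  have "card {x \<in> F \<times> F. U p \<subseteq> fst x \<and> V p \<subseteq> snd x} = ((card A - u) choose (r - u))^2"
    if "p \<in> P" for p
  proof -
    have "{x \<in> F \<times> F. U p \<subseteq> fst x \<and> V p \<subseteq> snd x} = {R \<in> F. U p \<subseteq> R} \<times> {C \<in> F. V p \<subseteq> C}"
      by auto
    moreover have "card {R \<in> F. W \<subseteq> R} = (card A - u) choose (r - u)"
      if "W \<subseteq> A" "card W = u" for W
      using card_supersets_of_card[OF assms(2) that(1)] that(2) assms(3) unfolding F_def
      by (simp add: conj_ac)
    ultimately show ?thesis
      using UV[OF that] by (simp add: card_cartesian_product power2_eq_square)
  qed
  then have "(\<Sum>p\<in>P. card {x \<in> F \<times> F. U p \<subseteq> fst x \<and> V p \<subseteq> snd x}) = card P * ((card A - u) choose (r - u))^2"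
    by simp
  moreover have "(\<Sum>p\<in>P. card {x \<in> F \<times> F. U p \<subseteq> fst x \<and> V p \<subseteq> snd x})
      = (\<Sum>x\<in>F \<times> F. card {p \<in> P. U p \<subseteq> fst x \<and> V p \<subseteq> snd x})"
    using \<open>finite F\<close> assms(1) by (intro sum_multicount_gen) auto
  ultimately show ?thesis
    by (simp add: case_prod_beta')
qed

lemma binomial_shift_le:
  assumes "j \<le> r" "r \<le> N"
  shows "real ((N - j) choose (r - j)) * real N ^ j \<le> real (N choose r) * real r ^ j"
  using assms(1)
proof (induction j)
  case (Suc j)
  define c where "c = real ((N - j) choose (r - j))"
  define c' where "c' = real ((N - Suc j) choose (r - Suc j))"
  have "(r - j) * ((N - j) choose (r - j)) = (N - j) * ((N - j - 1) choose (r - j - 1))"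
    using Suc.prems by (intro times_binomial_minus1_eq) simp
  then have pascal: "real (N - j) * c' = real (r - j) * c"
    unfolding c_def c'_def by (simp flip: of_nat_mult)
  have "real j * real r \<le> real j * real N"
    using assms(2) by (intro mult_left_mono) auto
  then have "real (r - j) * real N \<le> real r * real (N - j)"
    using Suc.prems assms(2) by (simp add: of_nat_diff algebra_simps)
  then have "c * (real (r - j) * real N) \<le> c * (real r * real (N - j))"
    by (simp add: c_def mult_left_mono)
  then have "real (N - j) * (c' * real N) \<le> real (N - j) * (c * real r)"
    by (simp add: mult.assoc[symmetric] pascal) (simp add: algebra_simps)
  then have "c' * real N \<le> c * real r"
    using Suc.prems assms(2) by (simp add: mult_le_cancel_left)
  then have "c' * real N ^ Suc j \<le> real r * (c * real N ^ j)"
    by (simp add: mult_right_mono algebra_simps flip: mult.assoc)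
  also have "\<dots> \<le> real r * (real (N choose r) * real r ^ j)"
    using Suc by (simp add: c_def mult_left_mono)
  finally show ?case
    by (simp add: c'_def algebra_simps)
qed simp

lemma obtain_sample_size:
  fixes a D :: real and N k :: nat
  assumes "real k \<le> D" "1 \<le> D" "2 * D * real N < a" "a \<le> real N ^ 2"
  obtains r :: nat
  where "k \<le> r" "r \<le> N" "2 * D * N / a \<le> r / N" "r / N \<le> 4 * D * N / a"
proof -
  have "0 < N"
    using assms(2-4) by (cases "N = 0") auto
  then have "0 < a"
    using assms(2,3) by (smt (verit) zero_less_mult_iff of_nat_0_less_iff)
  define t where "t = 2 * D * N^2 / a"
  have "t < N"
    using assms(3) \<open>0 < a\<close> \<open>0 < N\<close> unfolding t_def by (simp add: divide_less_eq power2_eq_square)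
  have "2 * D \<le> t"
    using assms(2,4) \<open>0 < a\<close> unfolding t_def by (simp add: le_divide_eq)
  have "1 * real N ^ 2 \<le> 2 * D * real N ^ 2"
    using assms(2) by (intro mult_right_mono) auto
  then have "a \<le> 2 * D * real N ^ 2"
    using assms(4) by linarith
  then have "1 / N \<le> 2 * D * N / a"
    using \<open>0 < a\<close> \<open>0 < N\<close> by (simp add: field_simps power2_eq_square)
  show thesis
  proof
    show "k \<le> nat \<lceil>t\<rceil>"
      using assms(1) \<open>2 * D \<le> t\<close> assms(2) by linarith
    show "nat \<lceil>t\<rceil> \<le> N"
      using \<open>t < N\<close> by linarith
    have "real (nat \<lceil>t\<rceil>) = of_int \<lceil>t\<rceil>"
      using \<open>2 * D \<le> t\<close> assms(2) by simp
    then have "t \<le> real (nat \<lceil>t\<rceil>)" "real (nat \<lceil>t\<rceil>) \<le> t + 1"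
      by linarith+
    then have "t / N \<le> real (nat \<lceil>t\<rceil>) / N" "real (nat \<lceil>t\<rceil>) / N \<le> t / N + 1 / N"
      using \<open>0 < N\<close> by (simp_all add: divide_right_mono add_divide_distrib[symmetric])
    moreover have "t / N = 2 * D * N / a"
      using \<open>0 < N\<close> unfolding t_def by (simp add: power2_eq_square)
    ultimately show "2 * D * N / a \<le> real (nat \<lceil>t\<rceil>) / N" "real (nat \<lceil>t\<rceil>) / N \<le> 4 * D * N / a"
      using \<open>1 / N \<le> 2 * D * N / a\<close> by linarith+
  qed
qed

context permutation_pattern
begin

lemma sum_card_restrict_le:
  assumes "S \<subseteq> {..<N} \<times> {..<N}" "k \<le> r"
  shows "card S * ((N - 1) choose (r - 1))^2
    \<le> (N choose r)^2 * (2 * mt_const * r) + card (pattern_copies k \<pi> S) * ((N - k) choose (r - k))^2"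
proof -
  define F where "F = {R. R \<subseteq> {..<N} \<and> card R = r}"
  have "finite S"
    using assms(1) finite_subset by blast
  have "card F = N choose r"
    by (simp add: F_def n_subsets)
  have "(\<Sum>(R, C)\<in>F \<times> F. card {p \<in> S. {fst p} \<subseteq> R \<and> {snd p} \<subseteq> C})
      = card S * ((card {..<N} - 1) choose (r - 1))^2"
    unfolding F_def using assms k_gt_1
    by (intro sum_card_contained_in_subset_pairs[OF \<open>finite S\<close> finite_lessThan]) auto
  moreover have "{p \<in> S. {fst p} \<subseteq> R \<and> {snd p} \<subseteq> C} = S \<inter> R \<times> C" for R C
    by auto
  ultimately have points: "(\<Sum>(R, C)\<in>F \<times> F. card (S \<inter> R \<times> C)) = card S * ((N - 1) choose (r - 1))^2"
    by simp
  have "set xs \<subseteq> {..<N}" "set ys \<subseteq> {..<N}" if "(xs, ys) \<in> pattern_copies k \<pi> S" for xs ys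
    using set_pattern_copy_subset[OF that] assms(1) by force+
  then have copies: "(\<Sum>(R, C)\<in>F \<times> F. card (pattern_copies k \<pi> (S \<inter> R \<times> C)))
      = card (pattern_copies k \<pi> S) * ((N - k) choose (r - k))^2"
    unfolding pattern_copies_restrict F_def
    using sum_card_contained_in_subset_pairs[OF finite_pattern_copies[OF \<open>finite S\<close>] finite_lessThan assms(2),
        where U = "\<lambda>c. set (fst c)" and V = "\<lambda>c. set (snd c)"]
    by (auto simp: card_set_pattern_copy split_def)
  have "(\<Sum>(R, C)\<in>F \<times> F. card (S \<inter> R \<times> C))
      \<le> (\<Sum>(R, C)\<in>F \<times> F. 2 * mt_const * r + card (pattern_copies k \<pi> (S \<inter> R \<times> C)))"
  proof (intro sum_mono, clarify)
    fix R C assume "R \<in> F" "C \<in> F"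
    then have "finite R" "finite C" "card R = r" "card C = r"
      by (auto simp: F_def finite_subset)
    then show "card (S \<inter> R \<times> C) \<le> 2 * mt_const * r + card (pattern_copies k \<pi> (S \<inter> R \<times> C))"
      using card_le_mt_plus_card_copies[of R C "S \<inter> R \<times> C"] by (simp add: ac_simps flip: mult_2)
  qed
  also have "\<dots> = (N choose r)^2 * (2 * mt_const * r) + card (pattern_copies k \<pi> S) * ((N - k) choose (r - k))^2"
    using copies \<open>card F = N choose r\<close> by (simp add: sum.distrib split_def card_cartesian_product power2_eq_square)
  finally show ?thesis
    unfolding points .
qed


lemma card_mult_density_le:
  assumes "S \<subseteq> {..<N} \<times> {..<N}" "k \<le> r" "r \<le> N"
  defines "\<rho> \<equiv> real r / real N"
  shows "real (card S) * \<rho>^2 \<le> 2 * real mt_const * real r + real (card (pattern_copies k \<pi> S)) * \<rho>^(2*k)"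
proof -
  define B where "B = real (N choose r)"
  define X where "X = real (card (pattern_copies k \<pi> S))"
  have "0 < r" "0 < N"
    using assms(2,3) k_gt_1 by auto
  have "0 < B"
    unfolding B_def using assms(3) by simp
  have "r * (N choose r) = N * ((N - 1) choose (r - 1))"
    using \<open>0 < r\<close> by (rule times_binomial_minus1_eq)
  then have c1: "real ((N - 1) choose (r - 1)) = B * \<rho>"
    unfolding B_def \<rho>_def using \<open>0 < N\<close> by (simp add: field_simps flip: of_nat_mult)
  have "real ((N - k) choose (r - k)) * real N ^ k \<le> B * real r ^ k"
    unfolding B_def by (rule binomial_shift_le[OF assms(2,3)])
  then have "real ((N - k) choose (r - k)) \<le> B * \<rho>^k"
    unfolding \<rho>_def using \<open>0 < N\<close> by (simp add: field_simps power_divide)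
  then have "real ((N - k) choose (r - k))^2 \<le> (B * \<rho>^k)^2"
    by (intro power_mono) auto
  then have ck: "real (((N - k) choose (r - k))^2) \<le> B^2 * \<rho>^(2*k)"
    by (simp add: power_mult_distrib power_mult mult.commute)
  have "real (card S * ((N - 1) choose (r - 1))^2)
      \<le> real ((N choose r)^2 * (2 * mt_const * r) + card (pattern_copies k \<pi> S) * ((N - k) choose (r - k))^2)"
    using sum_card_restrict_le[OF assms(1,2)] by (simp only: of_nat_le_iff)
  then have "real (card S) * real ((N - 1) choose (r - 1))^2
      \<le> B^2 * (2 * real mt_const * real r) + X * real (((N - k) choose (r - k))^2)"
    unfolding B_def X_def by (simp only: of_nat_mult of_nat_add of_nat_power of_nat_numeral)
  then have "B^2 * (real (card S) * \<rho>^2) \<le> B^2 * (2 * real mt_const * real r) + X * real (((N - k) choose (r - k))^2)"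
    unfolding c1 by (simp add: algebra_simps power_mult_distrib)
  also have "\<dots> \<le> B^2 * (2 * real mt_const * real r) + X * (B^2 * \<rho>^(2*k))"
    using ck by (intro add_left_mono mult_left_mono) (auto simp: X_def)
  finally have "B^2 * (real (card S) * \<rho>^2) \<le> B^2 * (2 * real mt_const * real r + X * \<rho>^(2*k))"
    by (simp add: algebra_simps)
  then show ?thesis
    unfolding X_def using \<open>0 < B\<close> by simp
qed

lemma k_le_mt_const: "k \<le> mt_const"
proof -
  have "1 * k \<le> block_const * K"
    using k_gt_1 by (intro mult_le_mono) (auto simp: block_const_def)
  then show ?thesis
    by (simp add: mt_const_def)
qed

lemma card_pow_le_of_dense:
  assumes "S \<subseteq> {..<N} \<times> {..<N}" "4 * real mt_const * N < card S"
  shows "real (card S) ^ (2*k - 1)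
    \<le> 2 * real (card (pattern_copies k \<pi> S)) * (8 * real mt_const * N) ^ (2*k - 2)"
proof -
  define D where "D = 2 * real mt_const"
  define a where "a = real (card S)"
  define X where "X = real (card (pattern_copies k \<pi> S))"
  define q where "q = 2*k - 2"
  have q: "2*k = q + 2" "2*k - 1 = Suc q"
    using k_gt_1 by (simp_all add: q_def)
  have "card S \<le> card ({..<N} \<times> {..<N})"
    using assms(1) by (intro card_mono) auto
  then have "a \<le> real N ^ 2"
    unfolding a_def by (simp add: card_cartesian_product power2_eq_square flip: of_nat_mult)
  have "real k \<le> D" "1 \<le> D"
    using k_le_mt_const k_gt_1 unfolding D_def by linarith+
  moreover have "2 * D * N < a"
    using assms(2) unfolding D_def a_def by simp
  ultimately obtain r where r: "k \<le> r" "r \<le> N" "2 * D * N / a \<le> r / N" "r / N \<le> 4 * D * N / a"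
    using obtain_sample_size \<open>a \<le> real N ^ 2\<close> by blast
  define \<rho> where "\<rho> = real r / real N"
  have "0 < N" "0 < a"
    using r(1,2) k_gt_1 \<open>2 * D * N < a\<close> \<open>1 \<le> D\<close> by (auto intro: le_less_trans[rotated])
  have "0 < \<rho>"
    using r(1) k_gt_1 \<open>0 < N\<close> by (simp add: \<rho>_def)
  have "2 * D * N \<le> a * \<rho>"
    using r(3) \<open>0 < a\<close> by (simp add: \<rho>_def divide_le_eq mult.commute)
  have "a * \<rho>^2 \<le> D * r + X * \<rho>^(2*k)"
    using card_mult_density_le[OF assms(1) r(1,2)] unfolding a_def X_def D_def \<rho>_def by simp
  also have "D * r = (D * N) * \<rho>"
    using \<open>0 < N\<close> by (simp add: \<rho>_def)
  also have "\<dots> \<le> (a * \<rho> / 2) * \<rho>"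
    using \<open>2 * D * N \<le> a * \<rho>\<close> \<open>0 < \<rho>\<close> by (intro mult_right_mono) auto
  finally have "a / 2 * \<rho>^2 \<le> X * \<rho>^q * \<rho>^2"
    unfolding q(1) by (simp add: power_add power2_eq_square algebra_simps)
  then have "a / 2 \<le> X * \<rho>^q"
    using \<open>0 < \<rho>\<close> by simp
  also have "\<dots> \<le> X * (4 * D * N / a)^q"
    using r(4) \<open>0 < \<rho>\<close> unfolding \<rho>_def X_def by (intro mult_left_mono power_mono) auto
  finally have "a * a^q \<le> 2 * X * (4 * D * N)^q"
    using \<open>0 < a\<close> by (simp add: power_divide field_simps)
  then show ?thesis
    unfolding q(2) q_def[symmetric] a_def X_def D_def by (simp add: algebra_simps)
qed


lemma card_le_of_few_copies:
  assumes "S \<subseteq> {..<N} \<times> {..<N}" "card (pattern_copies k \<pi> S) \<le> m"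
  shows "real (card S) \<le> 16 * real mt_const * (real N + root (2*k - 1) (real m * real N ^ (2*k - 2)))"
proof -
  define q where "q = 2*k - 2"
  define c where "c = 16 * real mt_const"
  define y where "y = root (Suc q) (real m * real N ^ q)"
  have q: "2*k - 1 = Suc q"
    using k_gt_1 by (simp add: q_def)
  have "1 \<le> real mt_const"
    using k_le_mt_const k_gt_1 by simp
  have "0 \<le> y"
    by (simp add: y_def)
  have "real (card S) \<le> c * y"
    if dense: "4 * real mt_const * N < card S"
  proof -
    have "real (card S) ^ Suc q \<le> 2 * real (card (pattern_copies k \<pi> S)) * (8 * real mt_const * N) ^ q"
      using card_pow_le_of_dense[OF assms(1) dense] unfolding q q_def[symmetric] .
    also have "\<dots> \<le> 2 * real m * (8 * real mt_const * N) ^ q"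
      using assms(2) by (intro mult_right_mono) auto
    also have "\<dots> = (2 * (8 * real mt_const) ^ q) * (real m * real N ^ q)"
      by (simp add: power_mult_distrib mult_ac)
    also have "\<dots> \<le> (c * c ^ q) * (real m * real N ^ q)"
      unfolding c_def using \<open>1 \<le> real mt_const\<close> by (intro mult_right_mono mult_mono power_mono) auto
    finally have "real (card S) ^ Suc q \<le> c ^ Suc q * (real m * real N ^ q)"
      by simp
    then have "root (Suc q) (real (card S) ^ Suc q) \<le> root (Suc q) (c ^ Suc q * (real m * real N ^ q))"
      by (intro real_root_le_mono) auto
    moreover have "0 \<le> c"
      unfolding c_def by simp
    ultimately show ?thesis
      unfolding real_root_mult[of _ "c ^ Suc q"] y_def
      by (simp only: real_root_power_cancel[OF zero_less_Suc] of_nat_0_le_iff)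
  qed
  moreover have "c * y \<le> c * (real N + y)" "4 * real mt_const * N \<le> c * (real N + y)"
    using \<open>0 \<le> y\<close> \<open>1 \<le> real mt_const\<close> unfolding c_def by (simp_all add: distrib_left)
  ultimately show ?thesis
    unfolding c_def y_def q q_def[symmetric] by linarith
qed

end

section \<open>Counting sets with few copies\<close>

lemma three_halves_pow_le: "(3/2 :: real) ^ (q + 3) \<le> 2 ^ (q + 2)"
proof (induction q)
  case (Suc q)
  have "3/2 * (3/2 :: real) ^ (q + 3) \<le> 3/2 * 2 ^ (q + 2)"
    using Suc by (rule mult_left_mono) simp
  moreover have "(3/2 :: real) ^ (Suc q + 3) = 3/2 * (3/2) ^ (q + 3)" "(2 :: real) ^ (Suc q + 2) = 2 * 2 ^ (q + 2)"
    by (simp_all only: add_Suc power_Suc)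
  moreover have "0 \<le> (2 :: real) ^ (q + 2)"
    by simp
  ultimately show ?case
    by linarith
qed (simp add: power3_eq_cube)

context permutation_pattern
begin

definition few_copy_sets :: "nat \<Rightarrow> nat \<Rightarrow> (nat \<times> nat) set set" where
  "few_copy_sets m n = {S. S \<subseteq> {..<n} \<times> {..<n} \<and> card (pattern_copies k \<pi> S) \<le> m}"

definition count_exponent :: "nat \<Rightarrow> nat \<Rightarrow> real" where
  "count_exponent m n = real n + root (2*k - 1) (real m * real n ^ (2*k - 2))"

lemma finite_few_copy_sets: "finite (few_copy_sets m n)"
  unfolding few_copy_sets_def by (rule finite_subset[of _ "Pow ({..<n} \<times> {..<n})"]) auto

lemma card_few_copy_sets_mono: "n \<le> n' \<Longrightarrow> card (few_copy_sets m n) \<le> card (few_copy_sets m n')"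
  by (intro card_mono finite_few_copy_sets) (auto simp: few_copy_sets_def)

lemma count_exponent_nonneg: "0 \<le> count_exponent m n"
  by (simp add: count_exponent_def real_root_ge_zero)

lemma count_exponent_mono: "n \<le> n' \<Longrightarrow> count_exponent m n \<le> count_exponent m n'"
  unfolding count_exponent_def using k_gt_1
  by (intro add_mono real_root_le_mono mult_left_mono power_mono) auto

lemma count_exponent_double:
  "count_exponent m (2 * n) = 2 * real n + root (2*k - 1) (2 ^ (2*k - 2)) * root (2*k - 1) (real m * real n ^ (2*k - 2))"
  by (simp add: count_exponent_def real_root_mult[symmetric] power_mult_distrib mult_ac)

lemma root_two_pow_bounds: "3/2 \<le> root (2*k - 1) (2 ^ (2*k - 2))" "root (2*k - 1) (2 ^ (2*k - 2)) \<le> 2"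
proof -
  have k: "2*k - 1 = (2*k - 4) + 3" "0 < 2*k - 1" "2*k - 2 = (2*k - 4) + 2"
    using k_gt_1 by auto
  have "root (2*k - 1) ((3/2) ^ (2*k - 1)) \<le> root (2*k - 1) (2 ^ (2*k - 2))"
    using three_halves_pow_le[of "2*k - 4", folded k(1,3)] k(2) by (intro real_root_le_mono)
  then show "3/2 \<le> root (2*k - 1) (2 ^ (2*k - 2))"
    using k(2) by (simp add: real_root_power_cancel)
  have "root (2*k - 1) (2 ^ (2*k - 2)) \<le> root (2*k - 1) (2 ^ (2*k - 1))"
    using k(2) by (intro real_root_le_mono power_increasing) auto
  then show "root (2*k - 1) (2 ^ (2*k - 2)) \<le> 2"
    using k(2) by (simp add: real_root_power_cancel)
qed

lemma count_exponent_double_bounds: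
  "3/2 * count_exponent m n \<le> count_exponent m (2 * n)"
  "count_exponent m (2 * n) \<le> 2 * count_exponent m n"
proof -
  let ?y = "root (2*k - 1) (real m * real n ^ (2*k - 2))"
  have "0 \<le> ?y"
    by (simp add: real_root_ge_zero)
  note bounds = mult_right_mono[OF root_two_pow_bounds(1) this] mult_right_mono[OF root_two_pow_bounds(2) this]
  show "3/2 * count_exponent m n \<le> count_exponent m (2 * n)"
    using bounds unfolding count_exponent_double unfolding count_exponent_def
    by (simp add: distrib_left)
  show "count_exponent m (2 * n) \<le> 2 * count_exponent m n"
    using bounds unfolding count_exponent_double unfolding count_exponent_def
    by (simp add: distrib_left)
qed

definition doubling_const :: real where
  "doubling_const = 64 * ln 2 * real mt_const"

lemma block_contraction_mem_few_copy_sets: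
  assumes "S \<in> few_copy_sets m (2 * n)"
  shows "block 2 ` S \<in> few_copy_sets m n"
proof -
  have S: "S \<subseteq> {..<2*n} \<times> {..<2*n}" "card (pattern_copies k \<pi> S) \<le> m"
    using assms by (auto simp: few_copy_sets_def)
  then have "card (pattern_copies k \<pi> (block 2 ` S)) \<le> m"
    using card_pattern_copies_image_le[OF mono_div[of 2] mono_div[of 2] finite_subset[OF S(1)]]
    unfolding block_def by simp
  then show ?thesis
    using block_image_subset[OF S(1)] by (simp add: few_copy_sets_def)
qed

lemma card_block_contraction_fiber_le:
  assumes "S' \<in> few_copy_sets m n"
  shows "real (card {S \<in> few_copy_sets m (2 * n). block 2 ` S = S'}) \<le> exp (doubling_const * count_exponent m n)"
proof -
  have S': "S' \<subseteq> {..<n} \<times> {..<n}" "card (pattern_copies k \<pi> S') \<le> m"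
    using assms by (auto simp: few_copy_sets_def)
  then have "finite S'"
    using finite_subset by blast
  note preimage = card_block_vimage_le[of 2, OF _ this, simplified]
  have "card {S \<in> few_copy_sets m (2 * n). block 2 ` S = S'} \<le> card (Pow (block 2 -` S'))"
    using preimage(1) by (intro card_mono) auto
  also have "\<dots> \<le> 2 ^ (4 * card S')"
    using preimage by (simp add: card_Pow power_increasing)
  finally have "real (card {S \<in> few_copy_sets m (2 * n). block 2 ` S = S'}) \<le> 2 ^ (4 * card S')"
    by (simp flip: of_nat_le_iff)
  also have "\<dots> = exp (real (card S') * (4 * ln 2))"
    by (simp add: powr_def flip: powr_realpow)
  also have "\<dots> \<le> exp (16 * real mt_const * count_exponent m n * (4 * ln 2))"
    using card_le_of_few_copies[OF S'] by (simp add: count_exponent_def)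
  finally show ?thesis
    by (simp add: doubling_const_def mult_ac)
qed

lemma card_few_copy_sets_double:
  "real (card (few_copy_sets m (2 * n)))
    \<le> real (card (few_copy_sets m n)) * exp (doubling_const * count_exponent m n)"
proof -
  have "card (few_copy_sets m (2 * n))
      \<le> (\<Sum>S'\<in>few_copy_sets m n. card {S \<in> few_copy_sets m (2 * n). block 2 ` S = S'})"
    using block_contraction_mem_few_copy_sets by (intro card_le_sum_card_fibers finite_few_copy_sets) blast
  then have "real (card (few_copy_sets m (2 * n)))
      \<le> (\<Sum>S'\<in>few_copy_sets m n. real (card {S \<in> few_copy_sets m (2 * n). block 2 ` S = S'}))"
    by (simp only: of_nat_le_iff flip: of_nat_sum)
  also have "\<dots> \<le> (\<Sum>S'\<in>few_copy_sets m n. exp (doubling_const * count_exponent m n))"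
    by (intro sum_mono card_block_contraction_fiber_le)
  finally show ?thesis
    by simp
qed

definition count_const :: real where
  "count_const = 2 * doubling_const + 1"

lemma card_few_copy_sets_power_of_two:
  "real (card (few_copy_sets m (2^j))) \<le> exp (count_const * count_exponent m (2^j))"
proof (induction j)
  case 0
  have "few_copy_sets m 1 \<subseteq> Pow {(0, 0)}"
    by (auto simp: few_copy_sets_def)
  then have "card (few_copy_sets m 1) \<le> 2"
    using card_mono[of "Pow {(0::nat, 0::nat)}"] by (fastforce simp: card_Pow)
  moreover have "1 \<le> count_const" "1 \<le> count_exponent m 1"
    by (auto simp: count_const_def doubling_const_def count_exponent_def real_root_ge_zero)
  then have "exp 1 \<le> exp (count_const * count_exponent m 1)"
    using mult_mono[of 1 count_const 1 "count_exponent m 1"] by simp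
  moreover have "2 \<le> exp (1::real)"
    using exp_ge_add_one_self[of 1] by simp
  ultimately have "real (card (few_copy_sets m 1)) \<le> exp (count_const * count_exponent m 1)"
    by linarith
  then show ?case
    by simp
next
  case (Suc j)
  let ?e = "count_exponent m (2^j)"
  have "0 \<le> doubling_const"
    by (simp add: doubling_const_def)
  have "real (card (few_copy_sets m (2^Suc j))) \<le> real (card (few_copy_sets m (2^j))) * exp (doubling_const * ?e)"
    using card_few_copy_sets_double[of m "2^j"] by simp
  also have "\<dots> \<le> exp (count_const * ?e) * exp (doubling_const * ?e)"
    using Suc.IH by (rule mult_right_mono) simp
  also have "\<dots> = exp ((count_const + doubling_const) * ?e)"
    by (simp add: exp_add distrib_right)
  also have "\<dots> \<le> exp (count_const * (3/2 * ?e))"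
    using count_exponent_nonneg[of m "2^j"] \<open>0 \<le> doubling_const\<close>
    by (simp add: count_const_def mult_right_mono algebra_simps)
  also have "\<dots> \<le> exp (count_const * count_exponent m (2^Suc j))"
    using count_exponent_double_bounds(1)[of m "2^j"] \<open>0 \<le> doubling_const\<close>
    by (simp add: count_const_def mult_left_mono)
  finally show ?case .
qed

lemma card_few_copy_sets_le:
  "real (card (few_copy_sets m n)) \<le> exp (2 * count_const * count_exponent m n)"
proof (cases "n = 0")
  case True
  have "pattern_copies k \<pi> {} = {}"
    using k_gt_1 by (auto simp: pattern_copies_def)
  then have "few_copy_sets m 0 = {{}}"
    by (auto simp: few_copy_sets_def)
  moreover have "0 \<le> 2 * count_const * count_exponent m n"
    using count_exponent_nonneg by (simp add: count_const_def doubling_const_def)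
  ultimately show ?thesis
    using True by simp
next
  case False
  then obtain j where j: "2^j \<le> n" "n < 2^(j+1)"
    using ex_power_ivl1[of 2 n] by auto
  have "0 \<le> count_const"
    by (simp add: count_const_def doubling_const_def)
  have "real (card (few_copy_sets m n)) \<le> real (card (few_copy_sets m (2^(j+1))))"
    using card_few_copy_sets_mono j(2) by simp
  also have "\<dots> \<le> exp (count_const * count_exponent m (2^(j+1)))"
    by (rule card_few_copy_sets_power_of_two)
  also have "\<dots> \<le> exp (count_const * count_exponent m (2 * n))"
    using count_exponent_mono[of "2^(j+1)" "2 * n"] j(1) \<open>0 \<le> count_const\<close> by (simp add: mult_left_mono)
  also have "\<dots> \<le> exp (count_const * (2 * count_exponent m n))"
    using count_exponent_double_bounds(2) \<open>0 \<le> count_const\<close> by (simp add: mult_left_mono)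
  finally show ?thesis
    by (simp add: ac_simps)
qed

lemma copies_eq_pattern_copies:
  assumes "S \<subseteq> {..<n} \<times> {..<n}"
  shows "copies k \<pi> n (\<lambda>i j. (i, j) \<in> S) = pattern_copies k \<pi> S"
proof -
  have "pattern_copies k \<pi> S = pattern_copies k \<pi> (S \<inter> {..<n} \<times> {..<n})"
    using assms by (simp add: Int_absorb2)
  then show ?thesis
    unfolding copies_def pattern_copies_restrict by (auto simp: pattern_copies_def)
qed

lemma card_matrices_eq_card_few_copy_sets:
  "card {M \<in> zero_one_matrices n. num_copies k \<pi> n M \<le> m} = card (few_copy_sets m n)"
proof -
  have "bij_betw (\<lambda>S i j. (i, j) \<in> S) (few_copy_sets m n) {M \<in> zero_one_matrices n. num_copies k \<pi> n M \<le> m}"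
  proof (rule bij_betw_byWitness[where f' = "\<lambda>M. {(i, j). M i j}"])
    show "(\<lambda>S i j. (i, j) \<in> S) ` few_copy_sets m n \<subseteq> {M \<in> zero_one_matrices n. num_copies k \<pi> n M \<le> m}"
      by (auto simp: few_copy_sets_def zero_one_matrices_def num_copies_def copies_eq_pattern_copies)
    have "{(i, j). M i j} \<in> few_copy_sets m n" if "M \<in> zero_one_matrices n" "num_copies k \<pi> n M \<le> m" for M
    proof -
      have "{(i, j). M i j} \<subseteq> {..<n} \<times> {..<n}"
        using that(1) by (auto simp: zero_one_matrices_def)
      then show ?thesis
        using that(2) copies_eq_pattern_copies[of "{(i, j). M i j}" n]
        by (simp add: few_copy_sets_def num_copies_def)
    qed
    then show "(\<lambda>M. {(i, j). M i j}) ` {M \<in> zero_one_matrices n. num_copies k \<pi> n M \<le> m} \<subseteq> few_copy_sets m n"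
      by blast
  qed auto
  then show ?thesis
    by (rule bij_betw_same_card[symmetric])
qed

end

theorem proposition4p3:
  fixes k :: nat and \<pi> :: "nat \<Rightarrow> nat"
  assumes "k > 1" and "\<pi> permutes {..<k}"
  shows "\<exists>C::real. \<forall>m n :: nat.
    real (card {M \<in> zero_one_matrices n. num_copies k \<pi> n M \<le> m})
      \<le> exp (C * (real n + root (2 * k - 1) (real m * real n ^ (2 * k - 2))))"
proof -
  interpret permutation_pattern k \<pi>
    using assms by unfold_locales
  show ?thesis
  proof (intro exI allI)
    fix m n :: nat
    show "real (card {M \<in> zero_one_matrices n. num_copies k \<pi> n M \<le> m})
      \<le> exp (2 * count_const * (real n + root (2 * k - 1) (real m * real n ^ (2 * k - 2))))"
      using card_few_copy_sets_le[of m n]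
      unfolding card_matrices_eq_card_few_copy_sets count_exponent_def .
  qed
qed

end
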